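(* Let $n\ge4$, $l\in[n]$, $I\subseteq[n]$, $J=[n]\setminus I$ and $r=|I|$. Then the exponent of $A_l$ in $$\mathrm{lm}_\preceq\Big(\prod_{\substack{j\in J\\ i\in[n]\setminus\{j\}}}[\alpha_i,\alpha_j]\cdot\prod_{\substack{i\in I\\ m\in[n-2]}}[\beta_m,\alpha_i]\Big)$$ equals $$\begin{cases}n-2 & (l\in I)\\ n-l & (l\in J)\end{cases}\;-\;\begin{cases}l & (l+1\in J)\\ 0 & (\text{otherwise, i.e. } l+1\in I \text{ or } l=n)\end{cases}\;+\;\begin{cases}n-r-2\,|J\cap[l]| & (l\le n-1)\\ -r & (l=n).\end{cases}$$
   Context: Let $k$ be a field of characteristic zero; $[N]=\{1,\dots,N\}$. Symbols are pairs of independent indeterminates $\sigma=(\sigma_0,\sigma_1)$; the bracket is $[\sigma,\tau]:=\sigma_0\tau_1-\tau_0\sigma_1$. Fix $n\ge4$ and symbols $\alpha_1,\dots,\alpha_n,\beta_1,\dots,\beta_{n-2}$, and let $G$ be the $k$-algebra generated by all their brackets. Define $A_i=[\beta_{n-2},\alpha_i]$ ($1\le i\le n$), $B_i=[\beta_{n-2},\beta_i]$ ($1\le i\le n-3$), $C_i=[\alpha_i,\alpha_{i+1}]$ ($1\le i\le n-1$), $C_n=[\alpha_n,\beta_1]$, $D_i=[\beta_i,\beta_{i+1}]$ ($1\le i\le n-4$). These are algebraically independent and (Laurent phenomenon) $G\subset L=k[A_i,B_i,C_i,D_i,A_2^{-1},\dots,A_n^{-1},B_1^{-1},\dots,B_{n-4}^{-1}]$.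 The order $\preceq$ on Laurent monomials of $L$ is lexicographic on exponent vectors with variables ordered from largest to smallest as $(A_1,\dots,A_n,B_1,\dots,B_{n-3},C_1,\dots,C_n,D_1,\dots,D_{n-4})$; $\mathrm{lm}_\preceq(f)$ is the $\preceq$-largest Laurent monomial occurring in $f\ne0$. *)

theory Defs
  imports Complex_Main
begin

definition br :: "'k::field \<times> 'k \<Rightarrow> 'k \<times> 'k \<Rightarrow> 'k" where
  "br s t = fst s * snd t - fst t * snd s"

datatype var = VA nat | VB nat | VC nat | VD nat

text \<open>Variables listed from largest to smallest:
  A_1..A_n, B_1..B_(n-3), C_1..C_n, D_1..D_(n-4).\<close>
definition vars :: "nat \<Rightarrow> var list" where
  "vars n = map VA [1..<n+1] @ map VB [1..<n-2] @ map VC [1..<n+1] @ map VD [1..<n-3]"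

definition inv_ok :: "nat \<Rightarrow> var \<Rightarrow> bool" where
  "inv_ok n v = (case v of VA i \<Rightarrow> 2 \<le> i \<and> i \<le> n | VB i \<Rightarrow> 1 \<le> i \<and> i + 4 \<le> n | _ \<Rightarrow> False)"

definition varval :: "nat \<Rightarrow> (nat \<Rightarrow> 'k::field \<times> 'k) \<Rightarrow> (nat \<Rightarrow> 'k \<times> 'k) \<Rightarrow> var \<Rightarrow> 'k" where
  "varval n \<alpha> \<beta> v = (case v of
      VA i \<Rightarrow> br (\<beta> (n-2)) (\<alpha> i)
    | VB i \<Rightarrow> br (\<beta> (n-2)) (\<beta> i)
    | VC i \<Rightarrow> (if i < n then br (\<alpha> i) (\<alpha> (i+1)) else br (\<alpha> n) (\<beta> 1))
    | VD i \<Rightarrow> br (\<beta> i) (\<beta> (i+1)))"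

definition is_laurent :: "nat \<Rightarrow> ((var \<Rightarrow> int) \<Rightarrow> 'k::field) \<Rightarrow> bool" where
  "is_laurent n P \<longleftrightarrow> finite {e. P e \<noteq> 0} \<and>
     (\<forall>e. P e \<noteq> 0 \<longrightarrow> (\<forall>v. v \<notin> set (vars n) \<longrightarrow> e v = 0) \<and> (\<forall>v. e v < 0 \<longrightarrow> inv_ok n v))"

definition lev :: "nat \<Rightarrow> ((var \<Rightarrow> int) \<Rightarrow> 'k::field) \<Rightarrow> (nat \<Rightarrow> 'k \<times> 'k) \<Rightarrow> (nat \<Rightarrow> 'k \<times> 'k) \<Rightarrow> 'k" where
  "lev n P \<alpha> \<beta> = (\<Sum>e\<in>{e. P e \<noteq> 0}. P e * (\<Prod>v\<in>set (vars n). varval n \<alpha> \<beta> v powi e v))"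

text \<open>Since k is infinite and the variables are algebraically independent,
  this is equivalent to the identity f = P(A,B,C,D) in the fraction field.\<close>
definition represents :: "nat \<Rightarrow> ((var \<Rightarrow> int) \<Rightarrow> 'k::field) \<Rightarrow>
    ((nat \<Rightarrow> 'k \<times> 'k) \<Rightarrow> (nat \<Rightarrow> 'k \<times> 'k) \<Rightarrow> 'k) \<Rightarrow> bool" where
  "represents n P f \<longleftrightarrow> (\<forall>\<alpha> \<beta>. (\<forall>v\<in>set (vars n). inv_ok n v \<longrightarrow> varval n \<alpha> \<beta> v \<noteq> 0)
       \<longrightarrow> f \<alpha> \<beta> = lev n P \<alpha> \<beta>)"

definition lex_less :: "nat \<Rightarrow> (var \<Rightarrow> int) \<Rightarrow> (var \<Rightarrow> int) \<Rightarrow> bool" where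
  "lex_less n e e' \<longleftrightarrow> (\<exists>k < length (vars n).
      (\<forall>j<k. e (vars n ! j) = e' (vars n ! j)) \<and> e (vars n ! k) < e' (vars n ! k))"

definition lm :: "nat \<Rightarrow> ((var \<Rightarrow> int) \<Rightarrow> 'k::field) \<Rightarrow> var \<Rightarrow> int" where
  "lm n P = (THE e. P e \<noteq> 0 \<and> (\<forall>e'. P e' \<noteq> 0 \<longrightarrow> e' \<noteq> e \<longrightarrow> lex_less n e' e))"

end

theory Submission
  imports Defs "HOL-Computational_Algebra.Polynomial"
begin

text \<open>Specialise the symbols to pairs of Laurent monomials in one indeterminate s, with exponents
  built from weights w(v) = M^(4n-8-p), where p is the position of the variable v of L in the
  order. Each variable of L then becomes \<plusminus>s^w(v) plus lower powers of s, hence a Laurent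
  monomial with exponent vector e becomes a nonzero multiple of s^(w\<cdot>e) plus lower powers. If M
  exceeds twice every exponent that occurs, e \<mapsto> w\<cdot>e is strictly monotone for the
  lexicographic order, so the top power of s in the specialisation of P comes from lm(P). On the
  other side, the specialised product of brackets has top power w\<cdot>E, where E is the sum of the
  leading exponent vectors of the individual brackets. Since a nonzero Laurent function of s over
  an infinite field has a unique top power, lm(P) = E, and the A_l-coordinate of E is a count.\<close>

section \<open>Laurent functions of one variable\<close>

definition degree_below :: "int \<Rightarrow> ('k::field \<Rightarrow> 'k) \<Rightarrow> bool" where
  "degree_below D h \<longleftrightarrow> (\<exists>xs. (\<forall>p\<in>set xs. snd p < D) \<and>
      (\<forall>s. s \<noteq> 0 \<longrightarrow> h s = (\<Sum>p\<leftarrow>xs. fst p * s powi snd p)))"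

definition leading_term :: "'k::field \<Rightarrow> int \<Rightarrow> ('k \<Rightarrow> 'k) \<Rightarrow> bool" where
  "leading_term c D h \<longleftrightarrow> c \<noteq> 0 \<and> degree_below D (\<lambda>s. h s - c * s powi D)"

lemma degree_below_mono: "degree_below D h \<Longrightarrow> D \<le> D' \<Longrightarrow> degree_below D' h"
  unfolding degree_below_def by (meson order_less_le_trans)

lemma degree_below_cong: "degree_below D g \<Longrightarrow> (\<And>s. s \<noteq> 0 \<Longrightarrow> h s = g s) \<Longrightarrow> degree_below D h"
  unfolding degree_below_def by metis

lemma degree_below_zero: "degree_below D (\<lambda>s. 0)"
  unfolding degree_below_def by (rule exI[of _ "[]"]) simp

lemma degree_below_monom: "D < D' \<Longrightarrow> degree_below D' (\<lambda>s. c * s powi D)"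
  unfolding degree_below_def by (rule exI[of _ "[(c,D)]"]) simp

lemma degree_below_add:
  assumes "degree_below D h" "degree_below D g"
  shows "degree_below D (\<lambda>s. h s + g s)"
proof -
  obtain xs ys where "\<forall>p\<in>set xs. snd p < D" "\<forall>s. s \<noteq> 0 \<longrightarrow> h s = (\<Sum>p\<leftarrow>xs. fst p * s powi snd p)"
    "\<forall>p\<in>set ys. snd p < D" "\<forall>s. s \<noteq> 0 \<longrightarrow> g s = (\<Sum>p\<leftarrow>ys. fst p * s powi snd p)"
    using assms unfolding degree_below_def by blast
  then show ?thesis
    unfolding degree_below_def by (intro exI[of _ "xs @ ys"]) auto
qed

lemma degree_below_sum:
  "finite S \<Longrightarrow> (\<And>e. e \<in> S \<Longrightarrow> degree_below D (h e)) \<Longrightarrow> degree_below D (\<lambda>s. \<Sum>e\<in>S. h e s)"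
  by (induction S rule: finite_induct) (auto intro: degree_below_add degree_below_zero)

lemma degree_below_scale:
  assumes "degree_below D h"
  shows "degree_below (D + E) (\<lambda>s. c * s powi E * h s)"
proof -
  obtain xs where xs: "\<forall>p\<in>set xs. snd p < D" "\<forall>s. s \<noteq> 0 \<longrightarrow> h s = (\<Sum>p\<leftarrow>xs. fst p * s powi snd p)"
    using assms unfolding degree_below_def by blast
  let ?ys = "map (\<lambda>p. (c * fst p, E + snd p)) xs"
  have "c * s powi E * h s = (\<Sum>p\<leftarrow>?ys. fst p * s powi snd p)" if "s \<noteq> 0" for s
  proof -
    have "c * s powi E * h s = (\<Sum>p\<leftarrow>xs. c * s powi E * (fst p * s powi snd p))"
      using xs(2) that by (simp add: sum_list_const_mult)
    also have "\<dots> = (\<Sum>p\<leftarrow>?ys. fst p * s powi snd p)"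
      by (simp add: o_def power_int_add that mult_ac)
    finally show ?thesis .
  qed
  moreover have "\<forall>p\<in>set ?ys. snd p < D + E" using xs(1) by auto
  ultimately show ?thesis unfolding degree_below_def by blast
qed

lemma degree_below_neg: "degree_below D h \<Longrightarrow> degree_below D (\<lambda>s. - h s)"
  using degree_below_scale[of D h 0 "-1"] by simp

lemma degree_below_diff: "degree_below D h \<Longrightarrow> degree_below D g \<Longrightarrow> degree_below D (\<lambda>s. h s - g s)"
  using degree_below_add[of D h "\<lambda>s. - g s"] degree_below_neg[of D g] by simp

lemma degree_below_mult:
  assumes h: "degree_below D h" and g: "degree_below E g"
  shows "degree_below (D + E - 1) (\<lambda>s. h s * g s)"
proof -
  obtain xs where xs: "\<forall>p\<in>set xs. snd p < D" "\<forall>s. s \<noteq> 0 \<longrightarrow> h s = (\<Sum>p\<leftarrow>xs. fst p * s powi snd p)"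
    using h unfolding degree_below_def by blast
  have "degree_below (D + E - 1) (\<lambda>s. (\<Sum>p\<leftarrow>xs. fst p * s powi snd p) * g s)"
    using xs(1)
  proof (induction xs)
    case Nil
    show ?case by (simp add: degree_below_zero)
  next
    case (Cons p xs)
    have "degree_below (E + snd p) (\<lambda>s. fst p * s powi snd p * g s)"
      using degree_below_scale[OF g] .
    then have "degree_below (D + E - 1) (\<lambda>s. fst p * s powi snd p * g s)"
      by (rule degree_below_mono) (use Cons.prems in auto)
    from degree_below_add[OF this Cons.IH] Cons.prems show ?case
      by (simp add: distrib_right)
  qed
  then show ?thesis by (rule degree_below_cong) (use xs(2) in auto)
qed

lemma poly_sum_list_map: "poly (\<Sum>q\<leftarrow>ps. f q) x = (\<Sum>q\<leftarrow>ps. poly (f q) x)"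
  by (induction ps) auto

lemma coeff_sum_list: "coeff (\<Sum>q\<leftarrow>ps. f q) k = (\<Sum>q\<leftarrow>ps. coeff (f q) k)"
  by (induction ps) auto

lemma power_int_split:
  fixes s :: "'k::field"
  assumes "s \<noteq> 0" "m \<le> d"
  shows "s powi d = s ^ nat (d - m) * s powi m"
proof -
  have "s powi d = s powi (int (nat (d - m)) + m)" using assms(2) by simp
  also have "\<dots> = s powi int (nat (d - m)) * s powi m"
    using assms(1) by (rule power_int_add[OF disjI1])
  finally show ?thesis by (simp only: power_int_of_nat)
qed

lemma poly_eq_0_if_vanishes_off_0:
  fixes p :: "'k::field_char_0 poly"
  assumes "\<And>s. s \<noteq> 0 \<Longrightarrow> poly p s = 0"
  shows "p = 0"
proof (rule ccontr)
  assume "p \<noteq> 0"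
  then have "finite {x. poly p x = 0}" by (rule poly_roots_finite)
  moreover have "- {0} \<subseteq> {x. poly p x = 0}" using assms by auto
  ultimately have "finite (- {0::'k})" by (rule rev_finite_subset)
  then show False using infinite_UNIV_char_0[where 'a='k] by simp
qed

text \<open>Multiplying by a power of s turns the difference of the two sides into a polynomial
  vanishing on the infinite set k - {0}.\<close>
lemma degree_below_monom_iff:
  fixes c :: "'k::field_char_0"
  shows "degree_below D (\<lambda>s. c * s powi D) \<longleftrightarrow> c = 0"
proof
  assume "degree_below D (\<lambda>s. c * s powi D)"
  then obtain xs where xs: "\<forall>p\<in>set xs. snd p < D" "\<And>s. s \<noteq> 0 \<Longrightarrow> c * s powi D = (\<Sum>p\<leftarrow>xs. fst p * s powi snd p)"
    unfolding degree_below_def by blast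
  define m where "m = Min (insert D (snd ` set xs))"
  have mD: "m \<le> D" and mx: "\<And>p. p \<in> set xs \<Longrightarrow> m \<le> snd p" unfolding m_def by auto
  define p where "p = monom c (nat (D - m)) - (\<Sum>q\<leftarrow>xs. monom (fst q) (nat (snd q - m)))"
  have "poly p s = 0" if s: "s \<noteq> 0" for s
  proof -
    have "poly p s * s powi m = c * s powi D - (\<Sum>q\<leftarrow>xs. fst q * s powi snd q)"
    proof -
      have "(\<Sum>q\<leftarrow>xs. fst q * s ^ nat (snd q - m)) * s powi m = (\<Sum>q\<leftarrow>xs. fst q * s powi snd q)"
        unfolding sum_list_mult_const[symmetric]
        by (intro arg_cong[where f=sum_list] map_cong refl) (simp add: power_int_split[OF s mx] mult.assoc)
      moreover have "c * s ^ nat (D - m) * s powi m = c * s powi D"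
        by (simp add: power_int_split[OF s mD] mult.assoc)
      ultimately show ?thesis
        unfolding p_def by (simp add: poly_sum_list_map poly_monom left_diff_distrib)
    qed
    then show ?thesis using xs(2)[OF s] s by simp
  qed
  then have "p = 0" by (rule poly_eq_0_if_vanishes_off_0)
  moreover have "coeff p (nat (D - m)) = c"
  proof -
    have "(\<Sum>q\<leftarrow>xs. coeff (monom (fst q) (nat (snd q - m))) (nat (D - m))) = (\<Sum>q\<leftarrow>xs. 0)"
      by (intro arg_cong[where f=sum_list] map_cong refl) (use xs(1) mx in \<open>force simp: coeff_monom\<close>)
    then show ?thesis unfolding p_def by (simp add: coeff_diff coeff_sum_list)
  qed
  ultimately show "c = 0" by simp
qed (simp add: degree_below_zero)

lemma leading_term_imp_degree_below: "leading_term c D h \<Longrightarrow> degree_below (D + 1) h"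
  unfolding leading_term_def
  using degree_below_add[of "D + 1" "\<lambda>s. h s - c * s powi D" "\<lambda>s. c * s powi D"]
    degree_below_mono[of D _ "D + 1"] degree_below_monom[of D "D + 1" c] by force

lemma leading_term_not_degree_below:
  fixes h :: "'k::field_char_0 \<Rightarrow> 'k"
  assumes "leading_term c D h"
  shows "\<not> degree_below D h"
proof
  assume "degree_below D h"
  then have "degree_below D (\<lambda>s. h s - (h s - c * s powi D))"
    using degree_below_diff assms unfolding leading_term_def by blast
  then have "c = 0" by (simp add: degree_below_monom_iff)
  then show False using assms unfolding leading_term_def by simp
qed

lemma leading_term_unique:
  fixes h :: "'k::field_char_0 \<Rightarrow> 'k"
  assumes "leading_term c D h" "leading_term c' D' h"
  shows "D = D'"
  by (metis assms degree_below_mono leading_term_imp_degree_below leading_term_not_degree_below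
      linorder_neqE_linordered_idom zless_imp_add1_zle)

lemma leading_term_cong: "leading_term c D g \<Longrightarrow> (\<And>s. s \<noteq> 0 \<Longrightarrow> h s = g s) \<Longrightarrow> leading_term c D h"
  unfolding leading_term_def
  using degree_below_cong[of D "\<lambda>s. g s - c * s powi D" "\<lambda>s. h s - c * s powi D"] by auto

lemma leading_term_monom: "c \<noteq> 0 \<Longrightarrow> (\<And>s. s \<noteq> 0 \<Longrightarrow> h s = c * s powi D) \<Longrightarrow> leading_term c D h"
  unfolding leading_term_def by (auto intro: degree_below_cong[OF degree_below_zero])

lemma leading_term_binom: "c \<noteq> 0 \<Longrightarrow> E < D \<Longrightarrow> leading_term c D (\<lambda>s. c * s powi D + b * s powi E)"
  unfolding leading_term_def by (auto intro: degree_below_monom)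

lemma leading_term_mult:
  assumes "leading_term c D h" "leading_term b E g"
  shows "leading_term (c * b) (D + E) (\<lambda>s. h s * g s)"
proof -
  have h: "degree_below D (\<lambda>s. h s - c * s powi D)" and g: "degree_below E (\<lambda>s. g s - b * s powi E)"
    using assms unfolding leading_term_def by auto
  have "degree_below (D + E) (\<lambda>s. c * s powi D * (g s - b * s powi E)
      + (b * s powi E * (h s - c * s powi D) + (h s - c * s powi D) * (g s - b * s powi E)))"
    using degree_below_scale[OF g, of D c] degree_below_scale[OF h, of E b]
      degree_below_mono[OF degree_below_mult[OF h g], of "D + E"]
    by (intro degree_below_add) (simp_all add: add.commute)
  then have "degree_below (D + E) (\<lambda>s. h s * g s - c * b * s powi (D + E))"
    by (rule degree_below_cong) (simp add: power_int_add algebra_simps)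
  then show ?thesis using assms unfolding leading_term_def by simp
qed

lemma leading_term_one: "leading_term 1 0 (\<lambda>s. 1)"
  by (rule leading_term_monom) auto

lemma leading_term_prod:
  "finite V \<Longrightarrow> (\<And>v. v \<in> V \<Longrightarrow> leading_term (c v) (D v) (h v)) \<Longrightarrow>
    leading_term (\<Prod>v\<in>V. c v) (\<Sum>v\<in>V. D v) (\<lambda>s. \<Prod>v\<in>V. h v s)"
  by (induction V rule: finite_induct) (simp_all add: leading_term_one leading_term_mult)

lemma leading_term_power: "leading_term c D h \<Longrightarrow> leading_term (c ^ k) (D * int k) (\<lambda>s. h s ^ k)"
  by (induction k) (simp_all add: leading_term_one leading_term_mult algebra_simps)

text \<open>Negative powers are only available for monomials: the inverse of a Laurent polynomial
  need not be one.\<close>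
lemma leading_term_powi:
  assumes "leading_term c D h" and "0 \<le> k \<or> (\<forall>s. s \<noteq> 0 \<longrightarrow> h s = c * s powi D)"
  shows "leading_term (c powi k) (D * k) (\<lambda>s. h s powi k)"
  using assms(2)
proof
  assume "0 \<le> k"
  then obtain j where "k = int j" by (metis nonneg_eq_int)
  then show ?thesis using leading_term_power[OF assms(1), of j] by simp
next
  assume "\<forall>s. s \<noteq> 0 \<longrightarrow> h s = c * s powi D"
  moreover have "c \<noteq> 0" using assms(1) unfolding leading_term_def by simp
  ultimately show ?thesis
    by (intro leading_term_monom) (auto simp: power_int_mult_distrib power_int_mult)
qed

lemma leading_term_sum:
  assumes "finite S" "e1 \<in> S" "\<And>e. e \<in> S \<Longrightarrow> leading_term (c e) (D e) (h e)"
    and "\<And>e. e \<in> S \<Longrightarrow> e \<noteq> e1 \<Longrightarrow> D e < D e1"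
  shows "leading_term (c e1) (D e1) (\<lambda>s. \<Sum>e\<in>S. h e s)"
proof -
  have "degree_below (D e1) (h e)" if "e \<in> S - {e1}" for e
    using that assms(3,4)[of e] degree_below_mono[OF leading_term_imp_degree_below, of "c e" "D e" "h e" "D e1"]
    by simp
  then have "degree_below (D e1) (\<lambda>s. \<Sum>e\<in>S-{e1}. h e s)"
    using assms(1) by (intro degree_below_sum) auto
  moreover have "degree_below (D e1) (\<lambda>s. h e1 s - c e1 * s powi D e1)"
    using assms(2,3) unfolding leading_term_def by auto
  ultimately have "degree_below (D e1) (\<lambda>s. (h e1 s - c e1 * s powi D e1) + (\<Sum>e\<in>S-{e1}. h e s))"
    by (intro degree_below_add)
  then show ?thesis
    using assms(1-3) unfolding leading_term_def by (auto simp: sum.remove algebra_simps)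
qed

section \<open>Weights realising the lexicographic order\<close>

fun var_index :: "nat \<Rightarrow> var \<Rightarrow> nat" where
  "var_index n (VA i) = i - 1"
| "var_index n (VB i) = n + i - 1"
| "var_index n (VC i) = 2*n - 4 + i"
| "var_index n (VD i) = 3*n - 4 + i"

definition weight :: "nat \<Rightarrow> nat \<Rightarrow> nat \<Rightarrow> int" where
  "weight n M p = int M ^ (4*n - 8 - p)"

definition weighted_degree :: "nat \<Rightarrow> nat \<Rightarrow> (var \<Rightarrow> int) \<Rightarrow> int" where
  "weighted_degree n M e = (\<Sum>k<length (vars n). weight n M k * e (vars n ! k))"

definition exp_bounded :: "nat \<Rightarrow> int \<Rightarrow> (var \<Rightarrow> int) \<Rightarrow> bool" where
  "exp_bounded n K e \<longleftrightarrow> (\<forall>v. v \<notin> set (vars n) \<longrightarrow> e v = 0) \<and> (\<forall>v. \<bar>e v\<bar> \<le> K)"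

lemma length_vars: "4 \<le> n \<Longrightarrow> length (vars n) = 4*n - 7"
  by (simp add: vars_def)

lemma set_vars_iff: "v \<in> set (vars n) \<longleftrightarrow> (case v of VA i \<Rightarrow> 1 \<le> i \<and> i \<le> n | VB i \<Rightarrow> 1 \<le> i \<and> i + 3 \<le> n
   | VC i \<Rightarrow> 1 \<le> i \<and> i \<le> n | VD i \<Rightarrow> 1 \<le> i \<and> i + 4 \<le> n)"
  by (cases v) (auto simp: vars_def)

lemma nth_vars:
  assumes "4 \<le> n" "k < 4*n - 7"
  shows "vars n ! k = (if k < n then VA (k+1) else if k < 2*n-3 then VB (k+1-n)
     else if k < 3*n-3 then VC (k+4-2*n) else VD (k+4-3*n))"
proof -
  consider "k < n" | "n \<le> k" "k < 2*n-3" | "2*n-3 \<le> k" "k < 3*n-3" | "3*n-3 \<le> k" by linarith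
  then show ?thesis
    using assms by cases (simp_all add: vars_def nth_append_left nth_append_right del: upt_Suc, arith+)
qed

lemma var_index_nth_vars: "4 \<le> n \<Longrightarrow> k < 4*n - 7 \<Longrightarrow> var_index n (vars n ! k) = k"
  by (auto simp: nth_vars)

lemma var_index_less: "4 \<le> n \<Longrightarrow> v \<in> set (vars n) \<Longrightarrow> var_index n v < 4*n - 7"
  by (cases v) (auto simp: set_vars_iff)

lemma nth_vars_var_index: "4 \<le> n \<Longrightarrow> v \<in> set (vars n) \<Longrightarrow> vars n ! var_index n v = v"
  by (cases v) (auto simp: set_vars_iff nth_vars)

lemma weighted_degree_eq_sum_set_vars:
  assumes "4 \<le> n"
  shows "weighted_degree n M e = (\<Sum>v\<in>set (vars n). weight n M (var_index n v) * e v)"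
proof -
  have "bij_betw (\<lambda>k. vars n ! k) {..<4*n-7} (set (vars n))"
    using assms
    by (intro bij_betw_byWitness[where f' = "var_index n"])
      (auto simp: var_index_nth_vars nth_vars_var_index var_index_less length_vars)
  from sum.reindex_bij_betw[OF this, of "\<lambda>v. weight n M (var_index n v) * e v"] show ?thesis
    using assms unfolding weighted_degree_def by (simp add: length_vars var_index_nth_vars)
qed

lemma weighted_degree_add: "weighted_degree n M (\<lambda>v. a v + b v) = weighted_degree n M a + weighted_degree n M b"
  unfolding weighted_degree_def by (simp add: algebra_simps sum.distrib)

lemma weighted_degree_diff: "weighted_degree n M (\<lambda>v. a v - b v) = weighted_degree n M a - weighted_degree n M b"
  unfolding weighted_degree_def by (simp add: algebra_simps sum_subtractf)

lemma weighted_degree_sum: "weighted_degree n M (\<lambda>v. \<Sum>x\<in>X. f x v) = (\<Sum>x\<in>X. weighted_degree n M (f x))"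
  unfolding weighted_degree_def by (simp add: sum_distrib_left sum.swap[of _ X])

lemma weighted_degree_of_bool_eq:
  assumes "4 \<le> n" "w \<in> set (vars n)"
  shows "weighted_degree n M (\<lambda>v. of_bool (v = w)) = weight n M (var_index n w)"
  using assms by (simp add: weighted_degree_eq_sum_set_vars of_bool_def if_distrib sum.delta' cong: if_cong)

lemma weight_pos: "0 < M \<Longrightarrow> 0 < weight n M p"
  by (simp add: weight_def)

lemma weight_mult_le:
  assumes "p < q" "q \<le> 4*n - 8" "0 < M"
  shows "int M * weight n M q \<le> weight n M p"
proof -
  have "4*n - 8 - p = (4*n - 8 - q) + Suc (q - Suc p)" using assms by simp
  then have "weight n M p = int M * weight n M q * int M ^ (q - Suc p)"
    unfolding weight_def by (simp only: power_add power_Suc mult_ac)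
  moreover have "0 \<le> int M * weight n M q" using assms(3) by (simp add: weight_def)
  ultimately show ?thesis using assms(3) by (simp add: mult_le_cancel_left1)
qed

lemma weight_add_less:
  assumes "3 \<le> M" "p < q" "p < r" "q \<le> 4*n - 8" "r \<le> 4*n - 8"
  shows "weight n M q + weight n M r < weight n M p"
proof -
  have M: "0 < M" using assms(1) by simp
  have "int M * weight n M q \<le> weight n M p" "int M * weight n M r \<le> weight n M p"
    using weight_mult_le M assms by auto
  moreover have "3 * weight n M q \<le> int M * weight n M q" "3 * weight n M r \<le> int M * weight n M r"
    using assms(1) weight_pos[OF M] by (auto intro: mult_right_mono)
  ultimately show ?thesis using weight_pos[OF M, of n p] by linarith
qed

lemma weight_less: "3 \<le> M \<Longrightarrow> p < q \<Longrightarrow> q \<le> 4*n - 8 \<Longrightarrow> weight n M q < weight n M p"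
  using weight_add_less[of M p q q n] weight_pos[of M n q] by fastforce

lemma weight_antimono: "3 \<le> M \<Longrightarrow> p \<le> q \<Longrightarrow> q \<le> 4*n - 8 \<Longrightarrow> weight n M q \<le> weight n M p"
  using weight_less[of M p q n] by (cases "p = q") auto

lemma weight_tail_sum:
  assumes "k < 4*n - 7"
  shows "(int M - 1) * (\<Sum>q\<in>{k<..<4*n-7}. weight n M q) = weight n M k - 1"
  using assms
proof (induction "4*n - 8 - k" arbitrary: k)
  case 0
  then have "{k<..<4*n-7} = {}" "4*n - 8 - k = 0" by auto
  then show ?case by (simp add: weight_def)
next
  case (Suc j)
  then have "{k<..<4*n-7} = insert (Suc k) {Suc k<..<4*n-7}" "4*n - 8 - k = Suc (4*n - 8 - Suc k)"
    by auto
  moreover have "(int M - 1) * (\<Sum>q\<in>{Suc k<..<4*n-7}. weight n M q) = weight n M (Suc k) - 1"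
    using Suc by auto
  ultimately show ?case by (simp add: weight_def algebra_simps)
qed

text \<open>The weight of position k exceeds the largest possible contribution of all later
  positions to a difference of two exponent vectors bounded by K, since M > 2K.\<close>
lemma weighted_degree_strict_mono:
  assumes n: "4 \<le> n" and K: "2 * K < int M" and a: "exp_bounded n K a" and b: "exp_bounded n K b"
    and "lex_less n a b"
  shows "weighted_degree n M a < weighted_degree n M b"
proof -
  let ?L = "4*n - 7"
  obtain k where k: "k < ?L" "\<And>j. j < k \<Longrightarrow> a (vars n ! j) = b (vars n ! j)"
    "a (vars n ! k) < b (vars n ! k)"
    using assms(5) n unfolding lex_less_def by (auto simp: length_vars)
  have "0 \<le> K" using a unfolding exp_bounded_def by (meson abs_ge_zero order_trans)
  with K have M0: "0 < M" by simp
  define g where "g q = weight n M q * (b (vars n ! q) - a (vars n ! q))" for q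
  have split: "{..<?L} = insert k ({..<k} \<union> {k<..<?L})" using k(1) by auto
  have "weighted_degree n M b - weighted_degree n M a = (\<Sum>q<?L. g q)"
    unfolding weighted_degree_def g_def using n by (simp add: length_vars sum_subtractf algebra_simps)
  also have "\<dots> = g k + (\<Sum>q\<in>{..<k} \<union> {k<..<?L}. g q)"
    unfolding split by (subst sum.insert) auto
  also have "\<dots> = g k + (\<Sum>q<k. g q) + (\<Sum>q\<in>{k<..<?L}. g q)"
    by (subst sum.union_disjoint) auto
  also have "(\<Sum>q<k. g q) = 0" using k(2) unfolding g_def by simp
  finally have diff: "weighted_degree n M b - weighted_degree n M a = g k + (\<Sum>q\<in>{k<..<?L}. g q)"
    by simp
  have "weight n M k \<le> g k"
    using k(3) weight_pos[OF M0, of n k] unfolding g_def by simp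
  moreover have "- (2*K * (\<Sum>q\<in>{k<..<?L}. weight n M q)) \<le> (\<Sum>q\<in>{k<..<?L}. g q)"
  proof -
    have "- (2*K * (\<Sum>q\<in>{k<..<?L}. weight n M q)) = (\<Sum>q\<in>{k<..<?L}. weight n M q * - (2*K))"
      by (simp add: sum_distrib_left sum_negf mult_ac)
    also have "\<dots> \<le> (\<Sum>q\<in>{k<..<?L}. g q)"
    proof (rule sum_mono)
      fix q
      have "\<bar>a (vars n ! q)\<bar> \<le> K" "\<bar>b (vars n ! q)\<bar> \<le> K" using a b unfolding exp_bounded_def by auto
      then show "weight n M q * - (2*K) \<le> g q"
        unfolding g_def using weight_pos[OF M0, of n q] by (intro mult_left_mono) auto
    qed
    finally show ?thesis .
  qed
  moreover have "2*K * (\<Sum>q\<in>{k<..<?L}. weight n M q) \<le> (int M - 1) * (\<Sum>q\<in>{k<..<?L}. weight n M q)"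
    using K M0 by (intro mult_right_mono sum_nonneg) (auto intro: less_imp_le weight_pos)
  ultimately show ?thesis
    using diff weight_tail_sum[OF k(1), of M] by linarith
qed

lemma lex_less_asym: "lex_less n a b \<Longrightarrow> \<not> lex_less n b a"
proof
  assume "lex_less n a b" "lex_less n b a"
  then obtain k1 k2 where
    k1: "\<forall>j<k1. a (vars n ! j) = b (vars n ! j)" "a (vars n ! k1) < b (vars n ! k1)" and
    k2: "\<forall>j<k2. b (vars n ! j) = a (vars n ! j)" "b (vars n ! k2) < a (vars n ! k2)"
    unfolding lex_less_def by blast
  show False
  proof (cases k1 k2 rule: linorder_cases)
    case less
    with k1(2) k2(1) show False by auto
  next
    case equal
    with k1(2) k2(2) show False by auto
  next
    case greater
    with k1(1) k2(2) show False by auto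
  qed
qed

lemma lex_less_total:
  assumes "exp_bounded n K a" "exp_bounded n K b" "a \<noteq> b"
  shows "lex_less n a b \<or> lex_less n b a"
proof -
  define differ where "differ k \<longleftrightarrow> k < length (vars n) \<and> a (vars n ! k) \<noteq> b (vars n ! k)" for k
  obtain v where v: "a v \<noteq> b v" using assms(3) by auto
  then have "v \<in> set (vars n)" using assms(1,2) unfolding exp_bounded_def by metis
  then obtain i where "i < length (vars n)" "vars n ! i = v" by (meson in_set_conv_nth)
  with v have "differ i" unfolding differ_def by simp
  then obtain k where k: "differ k" and least: "\<And>j. j < k \<Longrightarrow> \<not> differ j"
    using exists_least_iff[of differ] by blast
  have same: "\<forall>j<k. a (vars n ! j) = b (vars n ! j)"
  proof (intro allI impI)
    fix j assume "j < k"
    with k have "j < length (vars n)" unfolding differ_def by simp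
    with least[OF \<open>j < k\<close>] show "a (vars n ! j) = b (vars n ! j)" unfolding differ_def by simp
  qed
  show ?thesis
  proof (cases "a (vars n ! k) < b (vars n ! k)")
    case True
    with k same show ?thesis unfolding lex_less_def differ_def by blast
  next
    case False
    with k have "b (vars n ! k) < a (vars n ! k)" unfolding differ_def by simp
    with k same show ?thesis unfolding lex_less_def differ_def by (metis (no_types))
  qed
qed

lemma weighted_degree_inj:
  assumes "4 \<le> n" "2 * K < int M" "exp_bounded n K a" "exp_bounded n K b"
    and "weighted_degree n M a = weighted_degree n M b"
  shows "a = b"
  using lex_less_total[OF assms(3,4)] weighted_degree_strict_mono[OF assms(1,2)] assms(3-5)
  by (metis less_irrefl)

section \<open>A one-parameter specialisation of the symbols\<close>

definition var_weight :: "nat \<Rightarrow> nat \<Rightarrow> var \<Rightarrow> int" where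
  "var_weight n M v = weight n M (var_index n v)"

text \<open>With beta_(n-2) = (0, 1) the variables A_i and B_m specialise to exactly s^w(A_i) and
  s^w(B_m); the second coordinates are chosen so that C_i and D_m specialise to -s^w(C_i) resp.
  -s^w(D_m) plus lower powers of s.\<close>
definition alpha_exp :: "nat \<Rightarrow> nat \<Rightarrow> nat \<Rightarrow> int" where
  "alpha_exp n M i =
     (if i = 1 then - var_weight n M (VA 1) else var_weight n M (VC (i-1)) - var_weight n M (VA (i-1)))"

definition beta_exp :: "nat \<Rightarrow> nat \<Rightarrow> nat \<Rightarrow> int" where
  "beta_exp n M m =
     (if m = 1 then var_weight n M (VC n) - var_weight n M (VA n)
      else var_weight n M (VD (m-1)) - var_weight n M (VB (m-1)))"

definition spec_alpha :: "nat \<Rightarrow> nat \<Rightarrow> 'k::field \<Rightarrow> nat \<Rightarrow> 'k \<times> 'k" where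
  "spec_alpha n M s i = (- (s powi var_weight n M (VA i)), s powi alpha_exp n M i)"

definition spec_beta :: "nat \<Rightarrow> nat \<Rightarrow> 'k::field \<Rightarrow> nat \<Rightarrow> 'k \<times> 'k" where
  "spec_beta n M s m =
     (if m = n - 2 then (0, 1) else (- (s powi var_weight n M (VB m)), s powi beta_exp n M m))"

definition var_sign :: "var \<Rightarrow> 'k::field" where
  "var_sign v = (case v of VA _ \<Rightarrow> 1 | VB _ \<Rightarrow> 1 | _ \<Rightarrow> -1)"

lemma spec_beta_eq:
  "m \<noteq> n - 2 \<Longrightarrow> spec_beta n M s m = (- (s powi var_weight n M (VB m)), s powi beta_exp n M m)"
  by (simp add: spec_beta_def)

lemma var_weight_simps:
  "var_weight n M (VA i) = weight n M (i - 1)"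
  "var_weight n M (VB i) = weight n M (n + i - 1)"
  "var_weight n M (VC i) = weight n M (2*n - 4 + i)"
  "var_weight n M (VD i) = weight n M (3*n - 4 + i)"
  by (simp_all add: var_weight_def)

lemma weighted_degree_eq_sum_var_weight:
  "4 \<le> n \<Longrightarrow> weighted_degree n M e = (\<Sum>v\<in>set (vars n). var_weight n M v * e v)"
  by (simp add: weighted_degree_eq_sum_set_vars var_weight_def)

lemma leading_term_br_monoms_left:
  fixes a b c d :: int
  assumes "c + b < a + d"
  shows "leading_term (-1 :: 'k::field) (a + d) (\<lambda>s. br (- (s powi a), s powi b) (- (s powi c), s powi d))"
proof -
  have "leading_term (-1 :: 'k) (a + d) (\<lambda>s. (-1) * s powi (a + d) + 1 * s powi (c + b))"
    using assms by (intro leading_term_binom) auto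
  then show ?thesis by (rule leading_term_cong) (simp add: br_def power_int_add)
qed

lemma leading_term_br_monoms_right:
  fixes a b c d :: int
  assumes "a + d < c + b"
  shows "leading_term (1 :: 'k::field) (c + b) (\<lambda>s. br (- (s powi a), s powi b) (- (s powi c), s powi d))"
proof -
  have "leading_term (1 :: 'k) (c + b) (\<lambda>s. 1 * s powi (c + b) + (-1) * s powi (a + d))"
    using assms by (intro leading_term_binom) auto
  then show ?thesis by (rule leading_term_cong) (simp add: br_def power_int_add)
qed

context
  fixes n M :: nat
  assumes n4: "4 \<le> n" and M3: "3 \<le> M"
begin

lemma alpha_alpha_exp_less:
  assumes "1 \<le> i" "i < j" "j \<le> n"
  shows "var_weight n M (VA j) + alpha_exp n M i < var_weight n M (VA i) + alpha_exp n M j"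
proof -
  have "var_weight n M (VA j) + alpha_exp n M i < 0"
  proof (cases "i = 1")
    case True
    have "weight n M (j - 1) < weight n M 0" by (rule weight_less) (use assms True n4 M3 in arith)+
    with True show ?thesis by (simp add: alpha_exp_def var_weight_simps)
  next
    case False
    have "weight n M (j - 1) + weight n M (2*n - 4 + (i - 1)) < weight n M (i - 1 - 1)"
      by (rule weight_add_less) (use assms False n4 M3 in arith)+
    with False show ?thesis by (simp add: alpha_exp_def var_weight_simps)
  qed
  moreover have "0 < var_weight n M (VA i) + alpha_exp n M j"
  proof -
    have "weight n M (j - 1 - 1) \<le> weight n M (i - 1)" by (rule weight_antimono) (use assms n4 M3 in arith)+
    with assms M3 weight_pos[of M n "2*n - 4 + (j - 1)"] show ?thesis by (simp add: alpha_exp_def var_weight_simps)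
  qed
  ultimately show ?thesis by linarith
qed

lemma beta_alpha_exp_less:
  assumes "1 \<le> i" "i \<le> n" "1 \<le> m" "m + 3 \<le> n"
  shows "var_weight n M (VB m) + alpha_exp n M i < var_weight n M (VA i) + beta_exp n M m"
proof -
  have "var_weight n M (VB m) + alpha_exp n M i < 0"
  proof (cases "i = 1")
    case True
    have "weight n M (n + m - 1) < weight n M 0" by (rule weight_less) (use assms n4 M3 in arith)+
    with True show ?thesis by (simp add: alpha_exp_def var_weight_simps)
  next
    case False
    have "weight n M (n + m - 1) + weight n M (2*n - 4 + (i - 1)) < weight n M (i - 1 - 1)"
      by (rule weight_add_less) (use assms False n4 M3 in arith)+
    with False show ?thesis by (simp add: alpha_exp_def var_weight_simps)
  qed
  moreover have "0 < var_weight n M (VA i) + beta_exp n M m"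
  proof (cases "m = 1")
    case True
    have "weight n M (n - 1) \<le> weight n M (i - 1)" by (rule weight_antimono) (use assms n4 M3 in arith)+
    with True M3 weight_pos[of M n "2*n - 4 + n"] show ?thesis by (simp add: beta_exp_def var_weight_simps)
  next
    case False
    have "weight n M (n + (m - 1) - 1) \<le> weight n M (i - 1)"
      by (rule weight_antimono) (use assms n4 M3 in arith)+
    with False M3 weight_pos[of M n "3*n - 4 + (m - 1)"] show ?thesis by (simp add: beta_exp_def var_weight_simps)
  qed
  ultimately show ?thesis by linarith
qed

lemma beta_beta_exp_less:
  assumes "1 \<le> m" "m + 4 \<le> n"
  shows "var_weight n M (VB (m + 1)) + beta_exp n M m < var_weight n M (VD m)"
proof -
  have "var_weight n M (VB (m + 1)) + beta_exp n M m < 0"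
  proof (cases "m = 1")
    case True
    have "weight n M (n + 1) + weight n M (2*n - 4 + n) < weight n M (n - 1)"
      by (rule weight_add_less) (use assms n4 M3 in arith)+
    with True show ?thesis by (simp add: beta_exp_def var_weight_simps)
  next
    case False
    have "weight n M (n + m) + weight n M (3*n - 4 + (m - 1)) < weight n M (n + (m - 1) - 1)"
      by (rule weight_add_less) (use assms False n4 M3 in arith)+
    with False show ?thesis by (simp add: beta_exp_def var_weight_simps)
  qed
  with M3 weight_pos[of M n "3*n - 4 + m"] show ?thesis by (simp add: var_weight_simps)
qed

lemma leading_term_br_spec_alpha:
  assumes "1 \<le> i" "i \<le> n" "1 \<le> j" "j \<le> n" "i \<noteq> j"
  shows "leading_term (if i < j then -1 else 1 :: 'k::field)
     (var_weight n M (VA (min i j)) + alpha_exp n M (max i j))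
     (\<lambda>s::'k. br (spec_alpha n M s i) (spec_alpha n M s j))"
proof (cases "i < j")
  case True
  with assms show ?thesis
    using leading_term_br_monoms_left alpha_alpha_exp_less[of i j] by (simp add: spec_alpha_def)
next
  case False
  with assms have "var_weight n M (VA i) + alpha_exp n M j < var_weight n M (VA j) + alpha_exp n M i"
    using alpha_alpha_exp_less[of j i] by simp
  from leading_term_br_monoms_right[OF this] False show ?thesis by (simp add: spec_alpha_def)
qed

lemma leading_term_br_spec_beta_alpha:
  assumes "1 \<le> i" "i \<le> n" "1 \<le> m" "m \<le> n - 2"
  shows "leading_term (1 :: 'k::field)
     (if m = n - 2 then var_weight n M (VA i) else var_weight n M (VA i) + beta_exp n M m)
     (\<lambda>s::'k. br (spec_beta n M s m) (spec_alpha n M s i))"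
proof (cases "m = n - 2")
  case True
  then show ?thesis by (intro leading_term_monom) (auto simp: br_def spec_alpha_def spec_beta_def)
next
  case False
  with assms have "var_weight n M (VB m) + alpha_exp n M i < var_weight n M (VA i) + beta_exp n M m"
    using beta_alpha_exp_less[of i m] by simp
  from leading_term_br_monoms_right[OF this] False show ?thesis
    by (simp add: spec_alpha_def spec_beta_def add.commute)
qed

lemma leading_term_br_spec_alpha_beta:
  "leading_term (-1 :: 'k::field) (var_weight n M (VC n))
     (\<lambda>s::'k. br (spec_alpha n M s n) (spec_beta n M s 1))"
proof -
  have "var_weight n M (VB 1) + alpha_exp n M n < var_weight n M (VA n) + beta_exp n M 1"
    using beta_alpha_exp_less[of n 1] n4 by simp
  from leading_term_br_monoms_left[OF this] show ?thesis
    using n4 by (simp add: spec_alpha_def spec_beta_eq beta_exp_def)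
qed

lemma leading_term_br_spec_beta_beta:
  assumes "1 \<le> m" "m + 4 \<le> n"
  shows "leading_term (-1 :: 'k::field) (var_weight n M (VD m))
     (\<lambda>s::'k. br (spec_beta n M s m) (spec_beta n M s (m + 1)))"
proof -
  have "var_weight n M (VB (m + 1)) + beta_exp n M m < var_weight n M (VB m) + beta_exp n M (m + 1)"
    using assms beta_beta_exp_less[of m] by (simp add: beta_exp_def)
  from leading_term_br_monoms_left[OF this] show ?thesis
    using assms by (simp add: spec_beta_eq beta_exp_def)
qed

lemma varval_spec_eq_monom:
  assumes "v \<in> set (vars n)" "inv_ok n v" "(s::'k::field) \<noteq> 0"
  shows "varval n (spec_alpha n M s) (spec_beta n M s) v = var_sign v * s powi var_weight n M v"
proof (cases v)
  case (VB m)
  with assms have "m \<noteq> n - 2" by (simp add: inv_ok_def) arith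
  with assms VB show ?thesis by (simp add: varval_def br_def spec_alpha_def spec_beta_def var_sign_def)
qed (use assms in \<open>simp_all add: varval_def inv_ok_def br_def spec_alpha_def spec_beta_def var_sign_def\<close>)

lemma leading_term_spec_var:
  assumes "v \<in> set (vars n)"
  shows "leading_term (var_sign v :: 'k::field) (var_weight n M v)
     (\<lambda>s::'k. varval n (spec_alpha n M s) (spec_beta n M s) v)"
proof (cases v)
  case (VA i)
  with assms n4 show ?thesis
    by (intro leading_term_monom) (auto simp: varval_def br_def spec_alpha_def spec_beta_def var_sign_def set_vars_iff)
next
  case (VB m)
  with assms have "m \<noteq> n - 2" by (simp add: set_vars_iff) arith
  with VB n4 show ?thesis
    by (intro leading_term_monom) (auto simp: varval_def br_def spec_beta_def var_sign_def)
next
  case (VC i)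
  with assms have i: "1 \<le> i" "i \<le> n" by (auto simp: set_vars_iff)
  show ?thesis
  proof (cases "i < n")
    case True
    with i VC leading_term_br_spec_alpha[of i "i + 1"] show ?thesis
      by (simp add: varval_def var_sign_def alpha_exp_def)
  next
    case False
    with i VC leading_term_br_spec_alpha_beta show ?thesis by (simp add: varval_def var_sign_def)
  qed
next
  case (VD m)
  with assms leading_term_br_spec_beta_beta[of m] show ?thesis
    by (simp add: varval_def var_sign_def set_vars_iff)
qed

lemma leading_term_spec_monomial:
  assumes "c \<noteq> 0" "\<forall>v. e v < 0 \<longrightarrow> inv_ok n v"
  shows "leading_term (c * (\<Prod>v\<in>set (vars n). var_sign v powi e v)) (weighted_degree n M e)
     (\<lambda>s::'k::field. c * (\<Prod>v\<in>set (vars n). varval n (spec_alpha n M s) (spec_beta n M s) v powi e v))"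
proof -
  have "leading_term (\<Prod>v\<in>set (vars n). var_sign v powi e v) (\<Sum>v\<in>set (vars n). var_weight n M v * e v)
     (\<lambda>s::'k. \<Prod>v\<in>set (vars n). varval n (spec_alpha n M s) (spec_beta n M s) v powi e v)"
  proof (intro leading_term_prod leading_term_powi)
    fix v assume "v \<in> set (vars n)"
    then show "leading_term (var_sign v) (var_weight n M v) (\<lambda>s::'k. varval n (spec_alpha n M s) (spec_beta n M s) v)"
      and "0 \<le> e v \<or> (\<forall>s::'k. s \<noteq> 0 \<longrightarrow> varval n (spec_alpha n M s) (spec_beta n M s) v = var_sign v * s powi var_weight n M v)"
      using leading_term_spec_var varval_spec_eq_monom assms(2) by force+
  qed simp
  moreover have "leading_term c 0 (\<lambda>_::'k. c)" by (rule leading_term_monom) (simp_all add: assms(1))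
  ultimately show ?thesis
    using leading_term_mult n4 by (fastforce simp: weighted_degree_eq_sum_var_weight)
qed

end

section \<open>Leading exponent vectors of the brackets\<close>

definition lead_exp_AA :: "nat \<Rightarrow> nat \<Rightarrow> var \<Rightarrow> int" where
  "lead_exp_AA i j = (\<lambda>v. of_bool (v = VA (min i j)) + of_bool (v = VC (max i j - 1))
     - of_bool (v = VA (max i j - 1)))"

definition lead_exp_BA :: "nat \<Rightarrow> nat \<Rightarrow> nat \<Rightarrow> var \<Rightarrow> int" where
  "lead_exp_BA n m i =
     (if m = n - 2 then (\<lambda>v. of_bool (v = VA i))
      else if m = 1 then (\<lambda>v. of_bool (v = VA i) + of_bool (v = VC n) - of_bool (v = VA n))
      else (\<lambda>v. of_bool (v = VA i) + of_bool (v = VD (m - 1)) - of_bool (v = VB (m - 1))))"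

definition lead_exp :: "nat \<Rightarrow> nat set \<Rightarrow> var \<Rightarrow> int" where
  "lead_exp n I = (\<lambda>v. (\<Sum>j\<in>{1..n} - I. \<Sum>i\<in>{1..n} - {j}. lead_exp_AA i j v)
     + (\<Sum>i\<in>I. \<Sum>m\<in>{1..n-2}. lead_exp_BA n m i v))"

lemma lead_exp_AA_VA: "lead_exp_AA i j (VA l) = of_bool (l = min i j) - of_bool (l = max i j - 1)"
  by (simp add: lead_exp_AA_def)

lemma lead_exp_BA_VA: "4 \<le> n \<Longrightarrow> lead_exp_BA n m i (VA l) = of_bool (l = i) - of_bool (m = 1 \<and> l = n)"
  by (auto simp: lead_exp_BA_def)

lemma sum_of_bool_eq_min:
  assumes "j \<in> {1..n}" "l \<in> {1..n}"
  shows "(\<Sum>i\<in>{1..n} - {j}. of_bool (l = min i j) :: int) = (if l = j then int (n - j) else of_bool (l < j))"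
proof -
  have "({1..n} - {j}) \<inter> {i. l = min i j} = (if l = j then {j<..n} else if l < j then {l} else {})"
    using assms by (auto simp: min_def split: if_splits)
  then show ?thesis by auto
qed

lemma sum_of_bool_eq_max:
  assumes "j \<in> {1..n}" "l \<in> {1..n}"
  shows "(\<Sum>i\<in>{1..n} - {j}. of_bool (l = max i j - 1) :: int) =
    (if j = l + 1 then int l else of_bool (j \<le> l \<and> l < n))"
proof -
  have "({1..n} - {j}) \<inter> {i. l = max i j - 1} =
      (if j = l + 1 then {1..l} else if j \<le> l \<and> l < n then {l + 1} else {})"
    using assms by (auto simp: max_def split: if_splits)
  then show ?thesis by auto
qed

lemma sum_lead_exp_BA_VA:
  assumes "4 \<le> n" "finite I"
  shows "(\<Sum>i\<in>I. \<Sum>m\<in>{1..n-2}. lead_exp_BA n m i (VA l)) =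
      (if l \<in> I then int n - 2 else 0) - (if l = n then int (card I) else 0)"
proof -
  have "(\<Sum>m\<in>{1..n-2}. lead_exp_BA n m i (VA l)) = (int n - 2) * of_bool (l = i) - of_bool (l = n)" for i
  proof -
    have "{1..n-2} \<inter> {m. m = 1 \<and> l = n} = (if l = n then {1} else {})" using assms(1) by auto
    then show ?thesis using assms(1) by (simp add: lead_exp_BA_VA sum_subtractf of_nat_diff)
  qed
  then show ?thesis using assms(2) by (simp add: sum_subtractf sum_distrib_left)
qed

lemma sum_lead_exp_AA_VA:
  assumes "J \<subseteq> {1..n}" "l \<in> {1..n}"
  shows "(\<Sum>j\<in>J. \<Sum>i\<in>{1..n} - {j}. lead_exp_AA i j (VA l)) =
      (if l \<in> J then int (n - l) else 0) + int (card (J \<inter> {l<..}))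
      - (if l + 1 \<in> J then int l else 0) - (if l < n then int (card (J \<inter> {..l})) else 0)"
proof -
  have J: "finite J" using assms(1) by (rule finite_subset) simp
  have "(\<Sum>j\<in>J. \<Sum>i\<in>{1..n} - {j}. lead_exp_AA i j (VA l)) =
      (\<Sum>j\<in>J. ((if l = j then int (n - l) else 0) + of_bool (l < j))
        - ((if j = l + 1 then int l else 0) + of_bool (j \<le> l \<and> l < n)))"
  proof (rule sum.cong[OF refl])
    fix j assume "j \<in> J"
    with assms have j: "j \<in> {1..n}" by auto
    show "(\<Sum>i\<in>{1..n} - {j}. lead_exp_AA i j (VA l)) = ((if l = j then int (n - l) else 0) + of_bool (l < j))
        - ((if j = l + 1 then int l else 0) + of_bool (j \<le> l \<and> l < n))"
      unfolding lead_exp_AA_VA sum_subtractf sum_of_bool_eq_min[OF j assms(2)] sum_of_bool_eq_max[OF j assms(2)]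
      by auto
  qed
  also have "\<dots> = ((\<Sum>j\<in>J. if l = j then int (n - l) else 0) + (\<Sum>j\<in>J. of_bool (l < j)))
      - ((\<Sum>j\<in>J. if j = l + 1 then int l else 0) + (\<Sum>j\<in>J. of_bool (j \<le> l \<and> l < n)))"
    by (simp only: sum_subtractf sum.distrib)
  also have "(\<Sum>j\<in>J. of_bool (j \<le> l \<and> l < n)) = (if l < n then int (card (J \<inter> {..l})) else 0)"
    using J by (simp add: atMost_def)
  finally show ?thesis using J by (simp add: sum.delta sum.delta' greaterThan_def)
qed

lemma lead_exp_VA:
  assumes n: "4 \<le> n" and l: "l \<in> {1..n}" and I: "I \<subseteq> {1..n}"
  shows "lead_exp n I (VA l) =
           (if l \<in> I then int n - 2 else int n - int l)
         - (if l + 1 \<in> {1..n} - I then int l else 0)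
         + (if l \<le> n - 1 then int n - int (card I) - 2 * int (card (({1..n} - I) \<inter> {1..l}))
            else - int (card I))"
proof -
  define J where "J = {1..n} - I"
  have "finite I" using I by (rule finite_subset) simp
  have "J \<subseteq> {1..n}" unfolding J_def by auto
  have card_J: "card J = n - card I" "card I \<le> n"
    unfolding J_def using I by (simp_all add: card_Diff_subset finite_subset card_mono[of "{1..n}" I, simplified])
  have "finite J" using \<open>J \<subseteq> {1..n}\<close> by (rule finite_subset) simp
  have "card J = card ((J \<inter> {l<..}) \<union> (J \<inter> {..l}))" by (rule arg_cong[where f=card]) auto
  also have "\<dots> = card (J \<inter> {l<..}) + card (J \<inter> {..l})"
    by (rule card_Un_disjoint) (use \<open>finite J\<close> in auto)
  finally have count: "int (card (J \<inter> {l<..})) + int (card (J \<inter> {..l})) = int n - int (card I)"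
    using card_J by simp
  have "J \<inter> {..l} = J \<inter> {1..l}" using \<open>J \<subseteq> {1..n}\<close> by auto
  moreover have "l = n \<Longrightarrow> J \<inter> {l<..} = {}" using \<open>J \<subseteq> {1..n}\<close> by auto
  moreover have "l \<in> J \<longleftrightarrow> l \<notin> I" using l unfolding J_def by auto
  moreover have "lead_exp n I (VA l) =
      (\<Sum>j\<in>J. \<Sum>i\<in>{1..n} - {j}. lead_exp_AA i j (VA l)) + (\<Sum>i\<in>I. \<Sum>m\<in>{1..n-2}. lead_exp_BA n m i (VA l))"
    unfolding lead_exp_def J_def ..
  ultimately show ?thesis
    unfolding J_def[symmetric] sum_lead_exp_AA_VA[OF \<open>J \<subseteq> {1..n}\<close> l] sum_lead_exp_BA_VA[OF n \<open>finite I\<close>]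
    using count l by (cases "l = n"; cases "l \<in> I") (simp_all add: of_nat_diff le_diff_conv2)
qed

lemma lead_exp_outside_vars:
  assumes "4 \<le> n" "I \<subseteq> {1..n}" "v \<notin> set (vars n)"
  shows "lead_exp n I v = 0"
proof -
  have "lead_exp_AA i j v = 0" if "i \<in> {1..n}" "j \<in> {1..n}" "i \<noteq> j" for i j
    using that assms(3) by (auto simp: lead_exp_AA_def set_vars_iff min_def max_def)
  moreover have "lead_exp_BA n m i v = 0" if "i \<in> {1..n}" "m \<in> {1..n-2}" for i m
    using that assms(1,3) by (auto simp: lead_exp_BA_def set_vars_iff)
  ultimately show ?thesis
    unfolding lead_exp_def using assms(2) by (auto intro!: sum.neutral)
qed

lemma weighted_degree_lead_exp_AA:
  assumes n4: "4 \<le> n" and "i \<in> {1..n}" "j \<in> {1..n}" "i \<noteq> j"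
  shows "weighted_degree n M (lead_exp_AA i j) = var_weight n M (VA (min i j)) + alpha_exp n M (max i j)"
proof -
  have "VA (min i j) \<in> set (vars n)" "VC (max i j - 1) \<in> set (vars n)" "VA (max i j - 1) \<in> set (vars n)"
    "max i j \<noteq> 1"
    using assms by (auto simp: set_vars_iff min_def max_def)
  then show ?thesis
    unfolding lead_exp_AA_def weighted_degree_diff weighted_degree_add
    using n4 by (simp add: weighted_degree_of_bool_eq var_weight_def alpha_exp_def)
qed

lemma weighted_degree_lead_exp_BA:
  assumes n4: "4 \<le> n" and "i \<in> {1..n}" "m \<in> {1..n-2}"
  shows "weighted_degree n M (lead_exp_BA n m i) =
    (if m = n - 2 then var_weight n M (VA i) else var_weight n M (VA i) + beta_exp n M m)"
proof -
  have "VA i \<in> set (vars n)" "VA n \<in> set (vars n)" "VC n \<in> set (vars n)"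
    "m \<noteq> n - 2 \<Longrightarrow> m \<noteq> 1 \<Longrightarrow> VD (m - 1) \<in> set (vars n) \<and> VB (m - 1) \<in> set (vars n)"
    using assms n4 by (auto simp: set_vars_iff)
  then show ?thesis
    unfolding lead_exp_BA_def using n4
    by (auto simp: weighted_degree_of_bool_eq weighted_degree_diff weighted_degree_add var_weight_def beta_exp_def)
qed

lemma leading_term_spec_product:
  assumes n4: "4 \<le> n" and M3: "3 \<le> M" and I: "I \<subseteq> {1..n}"
  shows "\<exists>c. leading_term (c::'k::field) (weighted_degree n M (lead_exp n I)) (\<lambda>s::'k.
           (\<Prod>j\<in>{1..n} - I. \<Prod>i\<in>{1..n} - {j}. br (spec_alpha n M s i) (spec_alpha n M s j)) *
           (\<Prod>i\<in>I. \<Prod>m\<in>{1..n-2}. br (spec_beta n M s m) (spec_alpha n M s i)))"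
proof -
  have "leading_term (\<Prod>j\<in>{1..n} - I. \<Prod>i\<in>{1..n} - {j}. if i < j then -1 else 1 :: 'k)
      (\<Sum>j\<in>{1..n} - I. \<Sum>i\<in>{1..n} - {j}. weighted_degree n M (lead_exp_AA i j))
      (\<lambda>s::'k. \<Prod>j\<in>{1..n} - I. \<Prod>i\<in>{1..n} - {j}. br (spec_alpha n M s i) (spec_alpha n M s j))"
    by (intro leading_term_prod)
      (simp_all add: weighted_degree_lead_exp_AA[OF n4] leading_term_br_spec_alpha[OF n4 M3])
  moreover have "leading_term (\<Prod>i\<in>I. \<Prod>m\<in>{1..n-2}. 1 :: 'k)
      (\<Sum>i\<in>I. \<Sum>m\<in>{1..n-2}. weighted_degree n M (lead_exp_BA n m i))
      (\<lambda>s::'k. \<Prod>i\<in>I. \<Prod>m\<in>{1..n-2}. br (spec_beta n M s m) (spec_alpha n M s i))"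
    using I finite_subset[OF I]
    by (intro leading_term_prod)
      (auto simp: weighted_degree_lead_exp_BA[OF n4] leading_term_br_spec_beta_alpha[OF n4 M3])
  moreover have "weighted_degree n M (lead_exp n I) =
      (\<Sum>j\<in>{1..n} - I. \<Sum>i\<in>{1..n} - {j}. weighted_degree n M (lead_exp_AA i j)) +
      (\<Sum>i\<in>I. \<Sum>m\<in>{1..n-2}. weighted_degree n M (lead_exp_BA n m i))"
    unfolding lead_exp_def weighted_degree_add weighted_degree_sum ..
  ultimately show ?thesis using leading_term_mult by fastforce
qed

section \<open>The leading monomial\<close>

lemma lm_eqI:
  assumes "P E \<noteq> 0" "\<And>e. P e \<noteq> 0 \<Longrightarrow> e \<noteq> E \<Longrightarrow> lex_less n e E"
  shows "lm n P = E"
  unfolding lm_def using assms lex_less_asym by (intro the_equality) blast+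

lemma lm_eq_if_max_weighted_degree:
  assumes "4 \<le> n" "2 * K < int M" "P E \<noteq> 0"
    and bounded: "\<And>e. P e \<noteq> 0 \<Longrightarrow> exp_bounded n K e"
    and max: "\<And>e. P e \<noteq> 0 \<Longrightarrow> weighted_degree n M e \<le> weighted_degree n M E"
  shows "lm n P = E"
proof (rule lm_eqI)
  show "P E \<noteq> 0" by (fact assms(3))
next
  fix e assume e: "P e \<noteq> 0" "e \<noteq> E"
  have "weighted_degree n M e \<noteq> weighted_degree n M E"
    using weighted_degree_inj[OF assms(1,2) bounded[OF e(1)] bounded[OF assms(3)]] e(2) by blast
  with max[OF e(1)] have "weighted_degree n M e < weighted_degree n M E" by simp
  moreover have "lex_less n e E \<or> lex_less n E e"
    using lex_less_total[OF bounded[OF e(1)] bounded[OF assms(3)] e(2)] .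
  ultimately show "lex_less n e E"
    using weighted_degree_strict_mono[OF assms(1,2) bounded[OF assms(3)] bounded[OF e(1)]] by fastforce
qed

lemma ex_exp_bounded:
  assumes "finite X" "\<And>e v. e \<in> X \<Longrightarrow> v \<notin> set (vars n) \<Longrightarrow> e v = 0"
  shows "\<exists>K. 0 \<le> K \<and> (\<forall>e\<in>X. exp_bounded n K e)"
proof (intro exI conjI ballI)
  let ?K = "Max (insert 0 ((\<lambda>(e, v). \<bar>e v\<bar>) ` (X \<times> set (vars n))))"
  have fin: "finite (insert 0 ((\<lambda>(e, v). \<bar>e v\<bar>) ` (X \<times> set (vars n))))" using assms(1) by simp
  then show "0 \<le> ?K" by simp
  fix e assume e: "e \<in> X"
  have "\<bar>e v\<bar> \<le> ?K" for v
  proof (cases "v \<in> set (vars n)")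
    case True
    with e have "\<bar>e v\<bar> \<in> insert 0 ((\<lambda>(e, v). \<bar>e v\<bar>) ` (X \<times> set (vars n)))" by force
    with fin show ?thesis by simp
  next
    case False
    with e assms(2) fin show ?thesis by simp
  qed
  with e assms(2) show "exp_bounded n ?K e" unfolding exp_bounded_def by blast
qed

lemma represents_imp_spec_eq_lev:
  assumes "represents n P F" "4 \<le> n" "3 \<le> M" "(s::'k::field) \<noteq> 0"
  shows "F (spec_alpha n M s) (spec_beta n M s) = lev n P (spec_alpha n M s) (spec_beta n M s)"
proof -
  have "varval n (spec_alpha n M s) (spec_beta n M s) v \<noteq> 0" if "v \<in> set (vars n)" "inv_ok n v" for v
  proof -
    have "var_sign v \<noteq> (0::'k)" by (cases v) (simp_all add: var_sign_def)
    then show ?thesis using varval_spec_eq_monom[OF assms(2,3) that assms(4)] assms(4) by simp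
  qed
  with assms(1) show ?thesis unfolding represents_def by blast
qed

lemma leading_term_spec_lev:
  fixes P :: "(var \<Rightarrow> int) \<Rightarrow> 'k::field"
  assumes "4 \<le> n" "3 \<le> M" "is_laurent n P" "P e1 \<noteq> 0"
    and "\<And>e. P e \<noteq> 0 \<Longrightarrow> e \<noteq> e1 \<Longrightarrow> weighted_degree n M e < weighted_degree n M e1"
  shows "leading_term (P e1 * (\<Prod>v\<in>set (vars n). var_sign v powi e1 v)) (weighted_degree n M e1)
     (\<lambda>s. lev n P (spec_alpha n M s) (spec_beta n M s))"
  unfolding lev_def
  using assms(3-5)
  by (intro leading_term_sum[where D = "weighted_degree n M"])
    (auto simp: is_laurent_def intro!: leading_term_spec_monomial[OF assms(1,2)])

lemma lm_eq_if_spec_leading_term_at: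
  fixes P :: "(var \<Rightarrow> int) \<Rightarrow> 'k::field_char_0"
  assumes n4: "4 \<le> n" and M: "3 \<le> M" "2 * K < int M"
    and laurent: "is_laurent n P" and rep: "represents n P F"
    and bounded: "\<And>e. P e \<noteq> 0 \<Longrightarrow> exp_bounded n K e" "exp_bounded n K E"
    and F_lead: "leading_term c (weighted_degree n M E) (\<lambda>s::'k. F (spec_alpha n M s) (spec_beta n M s))"
  shows "lm n P = E"
proof -
  define S where "S = {e. P e \<noteq> 0}"
  have "finite S" using laurent unfolding is_laurent_def S_def by simp
  have F_lev: "F (spec_alpha n M s) (spec_beta n M s) = lev n P (spec_alpha n M s) (spec_beta n M s)"
    if "s \<noteq> 0" for s :: 'k
    using represents_imp_spec_eq_lev[OF rep n4 M(1) that] .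
  have "S \<noteq> {}"
  proof
    assume "S = {}"
    then have "degree_below (weighted_degree n M E) (\<lambda>s::'k. F (spec_alpha n M s) (spec_beta n M s))"
      using F_lev by (intro degree_below_cong[OF degree_below_zero]) (simp add: lev_def S_def)
    with F_lead show False using leading_term_not_degree_below by blast
  qed
  have "Max (weighted_degree n M ` S) \<in> weighted_degree n M ` S" using \<open>finite S\<close> \<open>S \<noteq> {}\<close> by simp
  then obtain e1 where "e1 \<in> S" "weighted_degree n M e1 = Max (weighted_degree n M ` S)"
    by (metis imageE)
  with \<open>finite S\<close> have e1: "P e1 \<noteq> 0" "\<And>e. P e \<noteq> 0 \<Longrightarrow> weighted_degree n M e \<le> weighted_degree n M e1"
    unfolding S_def by simp_all
  have less: "weighted_degree n M e < weighted_degree n M e1" if "P e \<noteq> 0" "e \<noteq> e1" for e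
  proof -
    have "weighted_degree n M e \<noteq> weighted_degree n M e1"
      using weighted_degree_inj[OF n4 M(2) bounded(1) bounded(1)] that e1(1) by blast
    with e1(2)[OF that(1)] show ?thesis by simp
  qed
  have "leading_term (P e1 * (\<Prod>v\<in>set (vars n). var_sign v powi e1 v)) (weighted_degree n M e1)
      (\<lambda>s::'k. F (spec_alpha n M s) (spec_beta n M s))"
    using leading_term_spec_lev[OF n4 M(1) laurent e1(1) less] F_lev by (auto intro: leading_term_cong)
  then have "weighted_degree n M e1 = weighted_degree n M E" using F_lead by (rule leading_term_unique)
  then have "e1 = E" using weighted_degree_inj[OF n4 M(2) bounded(1)[OF e1(1)] bounded(2)] by blast
  with e1 show ?thesis using lm_eq_if_max_weighted_degree[OF n4 M(2)] bounded by blast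
qed

lemma lm_eq_if_spec_leading_term:
  fixes P :: "(var \<Rightarrow> int) \<Rightarrow> 'k::field_char_0"
  assumes n4: "4 \<le> n" and laurent: "is_laurent n P" and rep: "represents n P F"
    and E_vars: "\<And>v. v \<notin> set (vars n) \<Longrightarrow> E v = 0"
    and F_lead: "\<And>M. 3 \<le> M \<Longrightarrow> \<exists>c. leading_term c (weighted_degree n M E)
                   (\<lambda>s::'k. F (spec_alpha n M s) (spec_beta n M s))"
  shows "lm n P = E"
proof -
  have "finite (insert E {e. P e \<noteq> 0})" using laurent unfolding is_laurent_def by simp
  then have "\<exists>K. 0 \<le> K \<and> (\<forall>e\<in>insert E {e. P e \<noteq> 0}. exp_bounded n K e)"
    using E_vars laurent unfolding is_laurent_def by (intro ex_exp_bounded) auto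
  then obtain K where "0 \<le> K" and bounded: "\<And>e. P e \<noteq> 0 \<Longrightarrow> exp_bounded n K e" "exp_bounded n K E"
    by blast
  define M where "M = nat (2*K + 3)"
  have M: "3 \<le> M" "2 * K < int M" unfolding M_def using \<open>0 \<le> K\<close> by auto
  with F_lead obtain c where
    "leading_term c (weighted_degree n M E) (\<lambda>s::'k. F (spec_alpha n M s) (spec_beta n M s))"
    by blast
  from lm_eq_if_spec_leading_term_at[OF n4 M laurent rep bounded this] show ?thesis .
qed

theorem lemma5p5:
  fixes n l :: nat and I :: "nat set" and P :: "(var \<Rightarrow> int) \<Rightarrow> 'k::field_char_0"
  assumes "n \<ge> 4" and "l \<in> {1..n}" and "I \<subseteq> {1..n}"
    and "is_laurent n P"
    and "represents n P (\<lambda>\<alpha> \<beta>.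
           (\<Prod>j\<in>{1..n} - I. \<Prod>i\<in>{1..n} - {j}. br (\<alpha> i) (\<alpha> j)) *
           (\<Prod>i\<in>I. \<Prod>m\<in>{1..n-2}. br (\<beta> m) (\<alpha> i)))"
  shows "lm n P (VA l) =
           (if l \<in> I then int n - 2 else int n - int l)
         - (if l + 1 \<in> {1..n} - I then int l else 0)
         + (if l \<le> n - 1 then int n - int (card I) - 2 * int (card (({1..n} - I) \<inter> {1..l}))
            else - int (card I))"
proof -
  have "lm n P = lead_exp n I"
    using assms(1,3-5) lead_exp_outside_vars leading_term_spec_product
    by (intro lm_eq_if_spec_leading_term) auto
  then show ?thesis using lead_exp_VA assms(1-3) by simp
qed

end
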